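(* Let $m,k\in\mathbb{N}$ and let $\gamma\in\mathbb{C}$ with $\gamma,\ -2m-\gamma\notin\mathbb{Z}_0^-$. Then \[ {}_3F_2\left[\begin{array}{r} -2m-1,\ 1+k,\ \gamma;\\ -2m-1-k,\ -2m-\gamma;\end{array}1\right]_{2m+1}=0. \]
   Context: $\mathbb{N}=\{1,2,3,\dots\}$, $\mathbb{Z}_0^-=\{0,-1,-2,\dots\}$. For $a\in\mathbb{C}$ and $n\in\mathbb{N}_0$, $(a)_0=1$ and $(a)_n=a(a+1)\cdots(a+n-1)$. For $N\in\mathbb{N}_0$, ${}_3F_2\left[\begin{array}{r} a_1,a_2,a_3;\\ b_1,b_2;\end{array}z\right]_N=\sum_{n=0}^{N}\frac{(a_1)_n(a_2)_n(a_3)_n}{(b_1)_n(b_2)_n}\frac{z^n}{n!}$ (the sum of the first $N+1$ terms), defined whenever $(b_1)_n(b_2)_n\neq0$ for $0\le n\le N$. *)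

theory Defs
  imports Complex_Main "HOL-Library.Nonpos_Ints"
begin

definition hyp3F2_trunc ::
  "complex \<Rightarrow> complex \<Rightarrow> complex \<Rightarrow> complex \<Rightarrow> complex \<Rightarrow> complex \<Rightarrow> nat \<Rightarrow> complex" where
  "hyp3F2_trunc a1 a2 a3 b1 b2 z N =
     (\<Sum>n=0..N. pochhammer a1 n * pochhammer a2 n * pochhammer a3 n
                 / (pochhammer b1 n * pochhammer b2 n) * z ^ n / of_nat (fact n))"

end

theory Submission
  imports Defs
begin

text \<open>With \<open>N = 2m + 1\<close>, the reflection formula for Pochhammer symbols turns every
  lower parameter into a ratio of factorials or Pochhammer symbols, and the \<open>n\<close>-th term
  becomes \<open>(-1)\<^sup>n s\<^sub>n\<close> times a constant, where \<open>s\<^sub>N\<^sub>-\<^sub>n = s\<^sub>n\<close>.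
  As \<open>N\<close> is odd, the terms \<open>n\<close> and \<open>N - n\<close> cancel.\<close>

lemma alternating_sum_symmetric_odd:
  fixes s :: "nat \<Rightarrow> 'a::{comm_ring_1, ring_char_0, semiring_no_zero_divisors}"
  assumes "odd N" and symmetric: "\<And>n. n \<le> N \<Longrightarrow> s (N - n) = s n"
  shows "(\<Sum>n=0..N. (-1) ^ n * s n) = 0"
proof -
  let ?S = "\<Sum>n=0..N. (-1) ^ n * s n"
  have "?S = (\<Sum>n=0..N. (-1) ^ (N - n) * s (N - n))"
    using sum.atLeastAtMost_rev[of _ 0 N] by simp
  also have "\<dots> = (\<Sum>n=0..N. - ((-1) ^ n * s n))"
  proof (rule sum.cong)
    fix n assume "n \<in> {0..N}"
    then have "n \<le> N" by simp
    have "(-1 :: 'a) ^ (N - n) = - ((-1) ^ n)"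
      using \<open>n \<le> N\<close> \<open>odd N\<close> by (auto simp: minus_one_power_iff)
    then show "(-1) ^ (N - n) * s (N - n) = - ((-1) ^ n * s n)"
      using symmetric[OF \<open>n \<le> N\<close>] by simp
  qed simp
  also have "\<dots> = - ?S"
    by (simp add: sum_negf)
  finally show ?thesis
    by simp
qed

lemma pochhammer_reflection:
  fixes g :: "'a::comm_ring_1"
  assumes "n \<le> N"
  shows "pochhammer (1 - of_nat N - g) n * pochhammer g (N - n) = (-1) ^ n * pochhammer g N"
proof -
  have "pochhammer (- (g + of_nat N - 1)) n = (-1) ^ n * pochhammer (g + of_nat N - 1 - of_nat n + 1) n"
    by (rule pochhammer_minus)
  moreover have "pochhammer g N = pochhammer g (N - n) * pochhammer (g + of_nat (N - n)) n"
    using pochhammer_product'[of g "N - n" n] assms by simp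
  ultimately show ?thesis
    using assms by (simp add: of_nat_diff algebra_simps)
qed

lemma pochhammer_minus_of_nat_mult_fact:
  assumes "n \<le> N"
  shows "pochhammer (- of_nat N :: 'a::{comm_ring_1, semiring_char_0}) n * fact (N - n) = (-1) ^ n * fact N"
  using pochhammer_reflection[OF assms, of 1] by (simp add: pochhammer_fact)

lemma fact_add_eq_fact_mult_pochhammer:
  "fact (k + n) = (fact k * pochhammer (1 + of_nat k) n :: 'a::{comm_semiring_1, semiring_char_0})"
  using pochhammer_product'[of 1 k n] by (simp add: pochhammer_fact add.commute)

lemma hyp3F2_term_reflected:
  fixes g :: complex
  assumes "n \<le> N" and "pochhammer g N \<noteq> 0"
  shows "pochhammer (- of_nat N) n * pochhammer (1 + of_nat k) n * pochhammer g n
      / (pochhammer (- of_nat N - of_nat k) n * pochhammer (1 - of_nat N - g) n) * 1 ^ n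
      / of_nat (fact n)
    = (-1) ^ n * (fact (k + n) * fact (N + k - n) * pochhammer g n * pochhammer g (N - n)
        / (fact n * fact (N - n)))
      * (fact N / (fact k * fact (N + k) * pochhammer g N))"
proof -
  have upper: "pochhammer (- of_nat N) n = (-1) ^ n * fact N / (fact (N - n) :: complex)"
    using pochhammer_minus_of_nat_mult_fact[OF assms(1)] by (simp add: field_simps)
  have "pochhammer (- of_nat (N + k)) n * fact (N + k - n) = (-1) ^ n * (fact (N + k) :: complex)"
    using assms(1) by (intro pochhammer_minus_of_nat_mult_fact) simp
  then have lower: "pochhammer (- of_nat N - of_nat k) n
      = (-1) ^ n * fact (N + k) / (fact (N + k - n) :: complex)"
    by (simp add: field_simps)
  have reflected: "pochhammer (1 - of_nat N - g) n * pochhammer g (N - n) = (-1) ^ n * pochhammer g N"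
    using pochhammer_reflection[OF assms(1)] .
  then have "pochhammer g (N - n) \<noteq> 0"
    using assms(2) by auto
  with reflected have lower_g: "pochhammer (1 - of_nat N - g) n
      = (-1) ^ n * pochhammer g N / pochhammer g (N - n)"
    by (simp add: field_simps)
  have shifted: "pochhammer (1 + of_nat k) n = fact (k + n) / (fact k :: complex)"
    by (simp add: fact_add_eq_fact_mult_pochhammer)
  have "(-1 :: complex) ^ n * (-1) ^ n = 1"
    by (simp add: minus_one_power_iff)
  with assms(2) \<open>pochhammer g (N - n) \<noteq> 0\<close> show ?thesis
    unfolding upper lower lower_g shifted by (simp add: field_simps)
qed

theorem mainTheorem12:
  fixes m k :: nat and \<gamma> :: complex
  assumes "m \<ge> 1" and "k \<ge> 1"
    and "\<gamma> \<notin> \<int>\<^sub>\<le>\<^sub>0" and "- 2 * of_nat m - \<gamma> \<notin> \<int>\<^sub>\<le>\<^sub>0"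
  shows "hyp3F2_trunc (- 2 * of_nat m - 1) (1 + of_nat k) \<gamma>
           (- 2 * of_nat m - 1 - of_nat k) (- 2 * of_nat m - \<gamma>) 1 (2 * m + 1) = 0"
proof -
  define N where "N = 2 * m + 1"
  define s where "s n = fact (k + n) * fact (N + k - n) * pochhammer \<gamma> n * pochhammer \<gamma> (N - n)
    / (fact n * fact (N - n) :: complex)" for n
  define c where "c = fact N / (fact k * fact (N + k) * pochhammer \<gamma> N :: complex)"
  have "pochhammer \<gamma> N \<noteq> 0"
    using assms(3) by (auto simp: pochhammer_eq_0_iff)
  have "hyp3F2_trunc (- of_nat N) (1 + of_nat k) \<gamma> (- of_nat N - of_nat k) (1 - of_nat N - \<gamma>) 1 N
      = (\<Sum>n=0..N. (-1) ^ n * s n * c)"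
    unfolding hyp3F2_trunc_def s_def c_def
    using hyp3F2_term_reflected[OF _ \<open>pochhammer \<gamma> N \<noteq> 0\<close>] by (intro sum.cong) auto
  also have "\<dots> = (\<Sum>n=0..N. (-1) ^ n * s n) * c"
    by (simp add: sum_distrib_right)
  also have "(\<Sum>n=0..N. (-1) ^ n * s n) = 0"
    by (rule alternating_sum_symmetric_odd) (auto simp: N_def s_def ac_simps)
  finally have "hyp3F2_trunc (- of_nat N) (1 + of_nat k) \<gamma> (- of_nat N - of_nat k)
      (1 - of_nat N - \<gamma>) 1 N = 0"
    by simp
  moreover have "- 2 * of_nat m - 1 = - (of_nat N :: complex)"
    and "- 2 * of_nat m - \<gamma> = 1 - of_nat N - \<gamma>" and "2 * m + 1 = N"
    by (simp_all add: N_def)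
  ultimately show ?thesis
    by simp
qed

end
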